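(* Let $q, k \in \mathbb{N}$ with $1 < q < \frac{k}{4}$. Let $D_1, \dots, D_q \in \mathbb{N}$ satisfy $$D_q(k - 4q) > 1 + \xi q(q-1) + 5\binom{k-q}{2}, \qquad \text{where } \xi = \max_{1 \leq j < q}\{D_j - D_{j+1}\}.$$ If there exists an $(a_1, \dots, a_q)$-flip graph $F$ (with a witnessing colouring) such that $e_j^F[v] = D_j$ for every $v \in V(F)$ and every $1 \leq j \leq q$, then for every $N \in \mathbb{N}$ there exists an $(a_1, \dots, a_k)$-flip graph for some $a_{q+1}, \dots, a_k \in \mathbb{N}$ with $a_k > N$.
   Context: For a graph $G$ with an edge-colouring $f\colon E(G)\to\{1,\dots,k\}$ and $1\le j\le k$: $e^G_j[v]$ is the number of edges coloured $j$ in the subgraph of $G$ induced by the closed neighbourhood $N[v]$ of $v$, and $\deg_j(v)$ is the number of edges coloured $j$ incident to $v$. Given a strictly increasing sequence of positive integers $(a_1,\dots,a_k)$, a $d$-regular graph $G$ with $d=\sum_j a_j$ is an $(a_1,\dots,a_k)$-flip graph if there is an edge-colouring with colours $\{1,\dots,k\}$ such that $\deg_j(v)=a_j$ for all vertices $v$ and all $j$, and $e_k[v]<e_{k-1}[v]<\dots<e_1[v]$ for every vertex $v$. *)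

theory Defs
  imports Main
begin

definition simple_graph :: "'a set \<Rightarrow> 'a set set \<Rightarrow> bool" where
  "simple_graph V E \<longleftrightarrow> finite V \<and>
     (\<forall>e\<in>E. \<exists>u v. u \<noteq> v \<and> u \<in> V \<and> v \<in> V \<and> e = {u, v})"

definition closed_nbhd :: "'a set set \<Rightarrow> 'a \<Rightarrow> 'a set" where
  "closed_nbhd E v = insert v {u. {u, v} \<in> E}"

definition deg_col :: "'a set set \<Rightarrow> ('a set \<Rightarrow> nat) \<Rightarrow> nat \<Rightarrow> 'a \<Rightarrow> nat" where
  "deg_col E c j v = card {e \<in> E. v \<in> e \<and> c e = j}"

definition e_col :: "'a set set \<Rightarrow> ('a set \<Rightarrow> nat) \<Rightarrow> nat \<Rightarrow> 'a \<Rightarrow> nat" where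
  "e_col E c j v = card {e \<in> E. e \<subseteq> closed_nbhd E v \<and> c e = j}"

definition flip_graph ::
  "'a set \<Rightarrow> 'a set set \<Rightarrow> ('a set \<Rightarrow> nat) \<Rightarrow> nat \<Rightarrow> (nat \<Rightarrow> nat) \<Rightarrow> bool" where
  "flip_graph V E c k a \<longleftrightarrow>
     simple_graph V E \<and> V \<noteq> {} \<and>
     (\<forall>j\<in>{1..k}. 0 < a j) \<and>
     (\<forall>i j. 1 \<le> i \<and> i < j \<and> j \<le> k \<longrightarrow> a i < a j) \<and>
     (\<forall>e\<in>E. c e \<in> {1..k}) \<and>
     (\<forall>v\<in>V. card {e \<in> E. v \<in> e} = (\<Sum>j=1..k. a j)) \<and>
     (\<forall>v\<in>V. \<forall>j\<in>{1..k}. deg_col E c j v = a j) \<and>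
     (\<forall>v\<in>V. \<forall>j. 1 \<le> j \<and> j < k \<longrightarrow> e_col E c (Suc j) v < e_col E c j v)"

end

theory Submission
  imports Defs
begin

text \<open>
  The extension consists of 2n copies of F, indexed by a side s and a position y modulo n, each
  carrying the edges and colours of F. A vertex (x, s, y) is joined to (x', not s, y') according
  to the difference of the two positions: the n differences are cut into m blocks, block i
  giving colour q + i; in block i, copy_count i differences join x only to its own copy and the
  next nbhd_count i differences join x to all of N[x]. So colour q + i has degree
  copy_count i + |N[x]| nbhd_count i = |N[x]| (W + m) + i.

  The closed neighbourhood of (x, s, y) meets each copy of F in nothing, in {x}, or in N[x].
  Hence e_j = D_j (1 + #neighbourhood differences) for j \<le> q, and
  e_(q+i) = copy_count i + (|N[x]| + 2 e(N[x])) nbhd_count i. As copy_count grows by |N[x]| + 1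
  and nbhd_count drops by one from block to block, the e_(q+i) strictly decrease; and since there
  are at least m W neighbourhood differences, e_q > e_(q+1) as soon as D_q m > |N[x]| + 2 e(N[x]),
  which is what the hypothesis yields. The parameter W is free, so a_k can be made arbitrarily
  large.
\<close>

lemma simple_graph_edgeE:
  assumes "simple_graph V E" "e \<in> E"
  obtains u v where "u \<noteq> v" "u \<in> V" "v \<in> V" "e = {u, v}"
  using assms unfolding simple_graph_def by blast

lemma simple_graph_edges_subset_Pow: "simple_graph V E \<Longrightarrow> E \<subseteq> Pow V"
  by (auto elim: simple_graph_edgeE)

lemma simple_graph_finite_edges: "simple_graph V E \<Longrightarrow> finite E"
  by (meson finite_Pow_iff finite_subset simple_graph_def simple_graph_edges_subset_Pow)

lemma simple_graph_edge_neq: "simple_graph V E \<Longrightarrow> {u, v} \<in> E \<Longrightarrow> u \<noteq> v"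
  unfolding simple_graph_def by (metis doubleton_eq_iff)

lemma simple_graph_edge_vertices: "simple_graph V E \<Longrightarrow> {u, v} \<in> E \<Longrightarrow> u \<in> V \<and> v \<in> V"
  unfolding simple_graph_def by (metis doubleton_eq_iff)

lemma closed_nbhd_iff: "u \<in> closed_nbhd E v \<longleftrightarrow> u = v \<or> {u, v} \<in> E"
  unfolding closed_nbhd_def by simp

lemma self_in_closed_nbhd [simp]: "v \<in> closed_nbhd E v"
  unfolding closed_nbhd_def by simp

lemma closed_nbhd_sym: "u \<in> closed_nbhd E v \<longleftrightarrow> v \<in> closed_nbhd E u"
  unfolding closed_nbhd_def by (auto simp: insert_commute)

lemma closed_nbhd_subset: "simple_graph V E \<Longrightarrow> v \<in> V \<Longrightarrow> closed_nbhd E v \<subseteq> V"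
  unfolding closed_nbhd_def by (auto dest: simple_graph_edge_vertices)

lemma finite_closed_nbhd: "simple_graph V E \<Longrightarrow> v \<in> V \<Longrightarrow> finite (closed_nbhd E v)"
  by (meson closed_nbhd_subset finite_subset simple_graph_def)

lemma card_incident_edges:
  assumes "simple_graph V E"
  shows "card {e \<in> E. v \<in> e \<and> P e} = card {u. {u, v} \<in> E \<and> P {u, v}}"
proof -
  have "{e \<in> E. v \<in> e \<and> P e} = (\<lambda>u. {u, v}) ` {u. {u, v} \<in> E \<and> P {u, v}}"
    using assms by (fastforce elim: simple_graph_edgeE simp: insert_commute)
  moreover have "inj (\<lambda>u. {u, v})"
    by (rule injI) (metis doubleton_eq_iff)
  ultimately show ?thesis
    by (simp add: card_image inj_on_subset)
qed

lemma card_adjacent_pairs: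
  assumes "simple_graph V E"
  shows "card {(u, w). u \<in> S \<and> w \<in> S \<and> {u, w} \<in> E \<and> P {u, w}} = 2 * card {e \<in> E. e \<subseteq> S \<and> P e}"
proof -
  let ?A = "{e \<in> E. e \<subseteq> S \<and> P e}"
  let ?pairs = "\<lambda>e. {(u, w). u \<noteq> w \<and> {u, w} = e}"
  have card_pairs: "card (?pairs e) = 2" if e: "e \<in> ?A" for e
  proof -
    obtain u w where "u \<noteq> w" "e = {u, w}"
      using e assms by (blast elim: simple_graph_edgeE)
    then have "?pairs e = {(u, w), (w, u)}" by (auto simp: doubleton_eq_iff)
    with \<open>u \<noteq> w\<close> show ?thesis by simp
  qed
  have "{(u, w). u \<in> S \<and> w \<in> S \<and> {u, w} \<in> E \<and> P {u, w}} = \<Union> (?pairs ` ?A)"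
    using simple_graph_edge_neq[OF assms] by auto
  also have "card \<dots> = (\<Sum>e\<in>?A. card (?pairs e))"
    using simple_graph_finite_edges[OF assms] card_pairs
    by (intro card_UN_disjoint) (auto intro: card_ge_0_finite)
  also have "\<dots> = 2 * card ?A"
    using card_pairs by simp
  finally show ?thesis .
qed

lemma card_eq_sum_colour_classes:
  fixes c :: "'a \<Rightarrow> nat"
  assumes "finite A" "\<forall>e\<in>A. c e \<in> {1..k}"
  shows "card A = (\<Sum>j=1..k. card {e \<in> A. c e = j})"
proof -
  have "A = (\<Union>j\<in>{1..k}. {e \<in> A. c e = j})"
    using assms(2) by blast
  also have "card \<dots> = (\<Sum>j=1..k. card {e \<in> A. c e = j})"
    using assms(1) by (intro card_UN_disjoint) auto
  finally show ?thesis .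
qed

lemma card_closed_nbhd:
  assumes "simple_graph V E" "v \<in> V"
  shows "card (closed_nbhd E v) = Suc (card {e \<in> E. v \<in> e})"
proof -
  have "finite {u. {u, v} \<in> E}"
    using finite_closed_nbhd[OF assms] unfolding closed_nbhd_def by simp
  moreover have "v \<notin> {u. {u, v} \<in> E}"
    using simple_graph_edge_neq[OF assms(1)] by blast
  ultimately show ?thesis
    using card_incident_edges[OF assms(1), of v "\<lambda>_. True"] unfolding closed_nbhd_def by simp
qed

lemma card_reflexive_adjacent_pairs:
  assumes "simple_graph V E" "finite S"
  shows "card {(u, w). u \<in> S \<and> w \<in> S \<and> (u = w \<or> {u, w} \<in> E)} = card S + 2 * card {e \<in> E. e \<subseteq> S}"
proof -
  let ?diag = "(\<lambda>u. (u, u)) ` S"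
  let ?adj = "{(u, w). u \<in> S \<and> w \<in> S \<and> {u, w} \<in> E}"
  have "{(u, w). u \<in> S \<and> w \<in> S \<and> (u = w \<or> {u, w} \<in> E)} = ?diag \<union> ?adj"
    by auto
  moreover have "?diag \<inter> ?adj = {}"
    using simple_graph_edge_neq[OF assms(1)] by auto
  moreover have "finite ?adj"
    by (rule finite_subset[of _ "S \<times> S"]) (use assms(2) in auto)
  moreover have "card ?diag = card S"
    by (simp add: card_image inj_on_def)
  ultimately show ?thesis
    using card_adjacent_pairs[OF assms(1), of S "\<lambda>_. True"] assms(2) by (simp add: card_Un_disjoint)
qed

lemma deg_col_le_e_col:
  assumes "simple_graph V E"
  shows "deg_col E c j v \<le> e_col E c j v"
  unfolding deg_col_def e_col_def
proof (rule card_mono)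
  show "finite {e \<in> E. e \<subseteq> closed_nbhd E v \<and> c e = j}"
    using simple_graph_finite_edges[OF assms] by simp
  show "{e \<in> E. v \<in> e \<and> c e = j} \<subseteq> {e \<in> E. e \<subseteq> closed_nbhd E v \<and> c e = j}"
    using assms by (fastforce elim: simple_graph_edgeE simp: closed_nbhd_def insert_commute)
qed

lemma flip_graphD:
  assumes "flip_graph V E c k a"
  shows "simple_graph V E" and "V \<noteq> {}"
    and "\<And>j. j \<in> {1..k} \<Longrightarrow> 0 < a j"
    and "\<And>i j. 1 \<le> i \<Longrightarrow> i < j \<Longrightarrow> j \<le> k \<Longrightarrow> a i < a j"
    and "\<And>e. e \<in> E \<Longrightarrow> c e \<in> {1..k}"
    and "\<And>v. v \<in> V \<Longrightarrow> card {e \<in> E. v \<in> e} = (\<Sum>j=1..k. a j)"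
    and "\<And>v j. v \<in> V \<Longrightarrow> j \<in> {1..k} \<Longrightarrow> deg_col E c j v = a j"
    and "\<And>v j. v \<in> V \<Longrightarrow> 1 \<le> j \<Longrightarrow> j < k \<Longrightarrow> e_col E c (Suc j) v < e_col E c j v"
  using assms unfolding flip_graph_def by blast+

section \<open>Graphs given by a symmetric relation\<close>

definition graph_edges :: "('v \<Rightarrow> 'v \<Rightarrow> bool) \<Rightarrow> 'v set set" where
  "graph_edges adj = {{u, w} | u w. adj u w}"

definition pair_colouring :: "('v \<Rightarrow> 'v \<Rightarrow> nat) \<Rightarrow> 'v set \<Rightarrow> nat" where
  "pair_colouring \<kappa> e = \<kappa> (SOME u. u \<in> e) (SOME w. w \<in> e \<and> w \<noteq> (SOME u. u \<in> e))"

lemma pair_colouring_doubleton: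
  assumes "\<And>u w. \<kappa> u w = \<kappa> w u" "u \<noteq> w"
  shows "pair_colouring \<kappa> {u, w} = \<kappa> u w"
proof -
  define u' where "u' = (SOME u'. u' \<in> {u, w})"
  define w' where "w' = (SOME w'. w' \<in> {u, w} \<and> w' \<noteq> u')"
  have "u' \<in> {u, w}"
    unfolding u'_def by (rule someI[of _ u]) simp
  moreover have "w' \<in> {u, w} \<and> w' \<noteq> u'"
    unfolding w'_def by (rule someI_ex) (use \<open>u \<noteq> w\<close> in blast)
  ultimately have "\<kappa> u' w' = \<kappa> u w"
    using assms by auto
  then show ?thesis
    unfolding pair_colouring_def u'_def w'_def .
qed

locale relation_graph =
  fixes V :: "'v set" and adj :: "'v \<Rightarrow> 'v \<Rightarrow> bool" and \<kappa> :: "'v \<Rightarrow> 'v \<Rightarrow> nat"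
  assumes finite_V: "finite V"
    and adj_in_V: "adj u w \<Longrightarrow> u \<in> V \<and> w \<in> V"
    and adj_sym: "adj u w \<Longrightarrow> adj w u"
    and adj_irrefl: "\<not> adj u u"
    and colour_sym: "\<kappa> u w = \<kappa> w u"
begin

abbreviation "edges \<equiv> graph_edges adj"
abbreviation "colouring \<equiv> pair_colouring \<kappa>"

lemma doubleton_in_edges: "{u, w} \<in> edges \<longleftrightarrow> adj u w"
  unfolding graph_edges_def using adj_sym by (auto simp: doubleton_eq_iff)

lemma simple_graph: "simple_graph V edges"
  unfolding simple_graph_def
proof (intro conjI ballI finite_V)
  fix e assume "e \<in> edges"
  then obtain u w where "e = {u, w}" "adj u w"
    unfolding graph_edges_def by blast
  then show "\<exists>u v. u \<noteq> v \<and> u \<in> V \<and> v \<in> V \<and> e = {u, v}"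
    using adj_in_V adj_irrefl by metis
qed

lemma colour_doubleton: "adj u w \<Longrightarrow> colouring {u, w} = \<kappa> u w"
  using pair_colouring_doubleton colour_sym adj_irrefl by metis

lemma closed_nbhd_eq: "closed_nbhd edges p = insert p {u. adj p u}"
  unfolding closed_nbhd_def using doubleton_in_edges adj_sym by blast

lemma deg_col_eq: "deg_col edges colouring j p = card {u. adj p u \<and> \<kappa> p u = j}"
proof -
  have "deg_col edges colouring j p = card {u. {u, p} \<in> edges \<and> colouring {u, p} = j}"
    unfolding deg_col_def by (rule card_incident_edges[OF simple_graph])
  also have "{u. {u, p} \<in> edges \<and> colouring {u, p} = j} = {u. adj p u \<and> \<kappa> p u = j}"
    using doubleton_in_edges colour_doubleton adj_sym colour_sym by (metis insert_commute)
  finally show ?thesis .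
qed

lemma e_col_eq:
  "2 * e_col edges colouring j p =
     card {(u, w). u \<in> closed_nbhd edges p \<and> w \<in> closed_nbhd edges p \<and> adj u w \<and> \<kappa> u w = j}"
proof -
  have "2 * e_col edges colouring j p =
      card {(u, w). u \<in> closed_nbhd edges p \<and> w \<in> closed_nbhd edges p \<and> {u, w} \<in> edges \<and> colouring {u, w} = j}"
    unfolding e_col_def by (rule card_adjacent_pairs[OF simple_graph, symmetric])
  also have "{(u, w). u \<in> closed_nbhd edges p \<and> w \<in> closed_nbhd edges p \<and> {u, w} \<in> edges \<and> colouring {u, w} = j}
      = {(u, w). u \<in> closed_nbhd edges p \<and> w \<in> closed_nbhd edges p \<and> adj u w \<and> \<kappa> u w = j}"
    using doubleton_in_edges colour_doubleton by auto
  finally show ?thesis .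
qed

end

section \<open>Relabelling vertices\<close>

lemma card_image_filter: "inj_on g A \<Longrightarrow> card {y \<in> g ` A. Q y} = card {x \<in> A. Q (g x)}"
proof -
  assume "inj_on g A"
  moreover have "{y \<in> g ` A. Q y} = g ` {x \<in> A. Q (g x)}"
    by blast
  ultimately show ?thesis
    by (simp add: card_image inj_on_subset)
qed

lemma flip_graph_image:
  assumes flip: "flip_graph V E c k a" and inj: "inj_on f V"
  shows "flip_graph (f ` V) (image f ` E) (\<lambda>e. c (inv_into V f ` e)) k a"
proof -
  let ?E = "image f ` E" and ?c = "\<lambda>e. c (inv_into V f ` e)"
  note F = flip_graphD[OF flip]
  have EV: "E \<subseteq> Pow V"
    by (rule simple_graph_edges_subset_Pow[OF F(1)])
  have inj_E: "inj_on (image f) E"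
    using inj_on_image_Pow[OF inj] EV by (rule inj_on_subset)
  have colour: "?c (f ` e) = c e" if "e \<in> E" for e
    using that EV inv_into_image_cancel[OF inj] by auto
  have mem: "f v \<in> f ` S \<longleftrightarrow> v \<in> S" if "v \<in> V" "S \<subseteq> V" for v S
    using inj_on_image_mem_iff[OF inj that] .
  have nbhd: "closed_nbhd ?E (f v) = f ` closed_nbhd E v" if v: "v \<in> V" for v
  proof -
    have edge: "{f u, f v} \<in> ?E \<longleftrightarrow> {u, v} \<in> E" if "u \<in> V" for u
      using inj_on_image_mem_iff[OF inj_on_image_Pow[OF inj] _ EV, of "{u, v}"] that v by simp
    have "{u'. {u', f v} \<in> ?E} = f ` {u. {u, v} \<in> E}"
    proof (intro equalityI subsetI)
      fix u' assume "u' \<in> {u'. {u', f v} \<in> ?E}"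
      then obtain e where "e \<in> E" "{u', f v} = f ` e"
        by auto
      then have "u' \<in> f ` e"
        by (metis insertI1)
      then obtain u where "u \<in> V" "u' = f u"
        using EV \<open>e \<in> E\<close> by blast
      then show "u' \<in> f ` {u. {u, v} \<in> E}"
        using edge \<open>u' \<in> {u'. {u', f v} \<in> ?E}\<close> by auto
    next
      fix u' assume "u' \<in> f ` {u. {u, v} \<in> E}"
      then show "u' \<in> {u'. {u', f v} \<in> ?E}"
        using edge simple_graph_edge_vertices[OF F(1)] by auto
    qed
    then show ?thesis
      unfolding closed_nbhd_def by simp
  qed
  have nbhd_subset: "closed_nbhd E v \<subseteq> V" if "v \<in> V" for v
    using closed_nbhd_subset[OF F(1) that] .
  have sub: "f ` e \<subseteq> f ` S \<longleftrightarrow> e \<subseteq> S" if "e \<subseteq> V" "S \<subseteq> V" for e S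
    using that mem by blast
  have incident: "card {e' \<in> ?E. f v \<in> e' \<and> P e'} = card {e \<in> E. v \<in> e \<and> P (f ` e)}"
    if "v \<in> V" for v P
  proof -
    have "{e \<in> E. f v \<in> f ` e \<and> P (f ` e)} = {e \<in> E. v \<in> e \<and> P (f ` e)}"
      using mem[OF that] EV by blast
    then show ?thesis
      by (simp add: card_image_filter[OF inj_E])
  qed
  have inner: "card {e' \<in> ?E. e' \<subseteq> closed_nbhd ?E (f v) \<and> ?c e' = j}
      = card {e \<in> E. e \<subseteq> closed_nbhd E v \<and> c e = j}" if "v \<in> V" for v j
  proof -
    have "{e \<in> E. f ` e \<subseteq> f ` closed_nbhd E v \<and> ?c (f ` e) = j}
        = {e \<in> E. e \<subseteq> closed_nbhd E v \<and> c e = j}"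
    proof (rule Collect_cong)
      fix e
      have "e \<in> E \<Longrightarrow> f ` e \<subseteq> f ` closed_nbhd E v \<longleftrightarrow> e \<subseteq> closed_nbhd E v"
        using sub[OF _ nbhd_subset[OF that]] EV by blast
      then show "(e \<in> E \<and> f ` e \<subseteq> f ` closed_nbhd E v \<and> ?c (f ` e) = j) \<longleftrightarrow>
          (e \<in> E \<and> e \<subseteq> closed_nbhd E v \<and> c e = j)"
        using colour by metis
    qed
    then show ?thesis
      by (simp add: card_image_filter[OF inj_E] nbhd[OF that])
  qed
  have "simple_graph (f ` V) ?E"
    using F(1) inj unfolding simple_graph_def inj_on_def by fastforce
  moreover have "?c e \<in> {1..k}" if "e \<in> ?E" for e
    using F(5) colour that by auto
  moreover have "card {e \<in> ?E. f v \<in> e} = (\<Sum>j=1..k. a j)" if "v \<in> V" for v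
    using incident[OF that, of "\<lambda>_. True"] F(6)[OF that] by simp
  moreover have "deg_col ?E ?c j (f v) = a j" if v: "v \<in> V" and j: "j \<in> {1..k}" for v j
  proof -
    have "deg_col ?E ?c j (f v) = card {e \<in> E. v \<in> e \<and> ?c (f ` e) = j}"
      unfolding deg_col_def by (rule incident[OF v])
    also have "{e \<in> E. v \<in> e \<and> ?c (f ` e) = j} = {e \<in> E. v \<in> e \<and> c e = j}"
      using colour by auto
    finally show ?thesis
      using F(7)[OF v j] unfolding deg_col_def by simp
  qed
  moreover have "e_col ?E ?c (Suc j) (f v) < e_col ?E ?c j (f v)"
    if "v \<in> V" "1 \<le> j" "j < k" for v j
    using F(8)[OF that] inner[OF that(1)] unfolding e_col_def by simp
  ultimately show ?thesis
    unfolding flip_graph_def using F(2-4) by (simp add: ball_simps)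
qed

lemma flip_graph_on_nat:
  assumes "flip_graph V E c k a"
  obtains V' :: "nat set" and E' c' where "flip_graph V' E' c' k a"
proof -
  have "finite V"
    using flip_graphD(1)[OF assms] unfolding simple_graph_def by blast
  then obtain f :: "'a \<Rightarrow> nat" where "inj_on f V"
    using finite_imp_inj_to_nat_seg by blast
  with assms that show ?thesis
    using flip_graph_image by blast
qed

lemma card_block_interval:
  fixes L :: nat
  assumes "i < m" "hi \<le> L"
  shows "card {\<delta>. \<delta> < m * L \<and> \<delta> div L = i \<and> lo \<le> \<delta> mod L \<and> \<delta> mod L < hi} = hi - lo"
proof -
  have "{\<delta>. \<delta> < m * L \<and> \<delta> div L = i \<and> lo \<le> \<delta> mod L \<and> \<delta> mod L < hi} = (\<lambda>r. i * L + r) ` {lo..<hi}"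
  proof (intro equalityI subsetI)
    fix \<delta> assume "\<delta> \<in> {\<delta>. \<delta> < m * L \<and> \<delta> div L = i \<and> lo \<le> \<delta> mod L \<and> \<delta> mod L < hi}"
    then show "\<delta> \<in> (\<lambda>r. i * L + r) ` {lo..<hi}"
      by (intro image_eqI[of _ _ "\<delta> mod L"]) (auto simp: mult.commute)
  next
    fix \<delta> assume "\<delta> \<in> (\<lambda>r. i * L + r) ` {lo..<hi}"
    then obtain r where "r \<in> {lo..<hi}" and r: "\<delta> = i * L + r"
      by (rule imageE)
    then have "lo \<le> r" "r < hi"
      by simp_all
    then have "r < L"
      using assms(2) by simp
    then have "\<delta> div L = i" "\<delta> mod L = r"
      using r by simp_all
    moreover have "\<delta> < m * L"
    proof -
      have "\<delta> < i * L + L" using r \<open>r < L\<close> by simp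
      also have "\<dots> = Suc i * L" by simp
      also have "\<dots> \<le> m * L" using assms(1) by (intro mult_le_mono1) simp
      finally show ?thesis .
    qed
    ultimately show "\<delta> \<in> {\<delta>. \<delta> < m * L \<and> \<delta> div L = i \<and> lo \<le> \<delta> mod L \<and> \<delta> mod L < hi}"
      using r \<open>lo \<le> r\<close> \<open>r < hi\<close> by simp
  qed
  then show ?thesis
    by (simp add: card_image)
qed

lemma card_reindex:
  assumes "bij_betw g Y \<Delta>"
  shows "card {y \<in> Y. P (g y)} = card {\<delta> \<in> \<Delta>. P \<delta>}"
proof -
  have "g ` {y \<in> Y. P (g y)} = {\<delta> \<in> \<Delta>. P \<delta>}"
    using assms by (auto simp: bij_betw_def)
  then show ?thesis
    using bij_betw_subset[OF assms, of "{y \<in> Y. P (g y)}"] bij_betw_same_card by fastforce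
qed

lemma card_reindex_snd:
  assumes "bij_betw g Y \<Delta>"
  shows "card {(z, y). y \<in> Y \<and> P z (g y)} = card {(z, \<delta>). \<delta> \<in> \<Delta> \<and> P z \<delta>}"
proof (rule bij_betw_same_card)
  show "bij_betw (\<lambda>(z, y). (z, g y)) {(z, y). y \<in> Y \<and> P z (g y)} {(z, \<delta>). \<delta> \<in> \<Delta> \<and> P z \<delta>}"
    by (rule bij_betw_byWitness[where f' = "\<lambda>(z, \<delta>). (z, inv_into Y g \<delta>)"])
      (use assms in \<open>auto simp: bij_betw_inv_into_left bij_betw_inv_into_right bij_betwE
        intro: bij_betw_apply bij_betw_inv_into[THEN bij_betw_apply]\<close>)
qed

lemma card_swap_closed_pairs:
  assumes "finite Y"
    and "\<And>u w. (u, w) \<in> Y \<Longrightarrow> (w, u) \<in> Y"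
    and "\<And>u w. (u, w) \<in> Y \<Longrightarrow> P u \<longleftrightarrow> \<not> P w"
  shows "card Y = 2 * card {z \<in> Y. P (fst z)}"
proof -
  let ?X = "{z \<in> Y. P (fst z)}"
  have Y: "Y = ?X \<union> prod.swap ` ?X"
    using assms(2,3) by (auto simp: image_iff)
  have "?X \<inter> prod.swap ` ?X = {}"
  proof (rule equals0I)
    fix z assume z: "z \<in> ?X \<inter> prod.swap ` ?X"
    obtain u w where "z = (u, w)"
      by fastforce
    with z have "(u, w) \<in> Y" "P u" "P w"
      by auto
    with assms(3) show False
      by blast
  qed
  then have "card (?X \<union> prod.swap ` ?X) = card ?X + card (prod.swap ` ?X)"
    using assms(1) by (intro card_Un_disjoint) simp_all
  then show ?thesis
    using arg_cong[where f = card, OF Y] by (simp add: card_image)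
qed

section \<open>The construction\<close>

locale flip_extension =
  fixes V :: "'a set" and E :: "'a set set" and c :: "'a set \<Rightarrow> nat"
    and q :: nat and a D :: "nat \<Rightarrow> nat" and m W :: nat
  assumes flip: "flip_graph V E c q a"
    and e_col_F: "\<And>v j. v \<in> V \<Longrightarrow> j \<in> {1..q} \<Longrightarrow> e_col E c j v = D j"
    and q_pos: "0 < q" and m_pos: "0 < m"
begin

lemmas F_simple = flip_graphD(1)[OF flip]
  and F_nonempty = flip_graphD(2)[OF flip]
  and F_deg_pos = flip_graphD(3)[OF flip]
  and F_deg_increasing = flip_graphD(4)[OF flip]
  and F_colour_range = flip_graphD(5)[OF flip]
  and F_degree = flip_graphD(6)[OF flip]
  and F_deg_col = flip_graphD(7)[OF flip]
  and F_e_col_decreasing = flip_graphD(8)[OF flip]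

abbreviation nbhd :: "'a \<Rightarrow> 'a set" where "nbhd \<equiv> closed_nbhd E"

definition nbhd_card :: nat where "nbhd_card = Suc (\<Sum>j=1..q. a j)"
definition nbhd_edges :: nat where "nbhd_edges = (\<Sum>j=1..q. D j)"

definition copy_count :: "nat \<Rightarrow> nat" where "copy_count i = i * Suc nbhd_card"
definition nbhd_count :: "nat \<Rightarrow> nat" where "nbhd_count i = W + m - i"
definition block_len :: nat where "block_len = m * Suc nbhd_card + W"
definition n :: nat where "n = m * block_len"

definition block :: "nat \<Rightarrow> nat" where "block \<delta> = Suc (\<delta> div block_len)"
definition copy_diff :: "nat \<Rightarrow> bool" where
  "copy_diff \<delta> \<longleftrightarrow> \<delta> < n \<and> \<delta> mod block_len < copy_count (block \<delta>)"
definition nbhd_diff :: "nat \<Rightarrow> bool" where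
  "nbhd_diff \<delta> \<longleftrightarrow> \<delta> < n \<and> copy_count (block \<delta>) \<le> \<delta> mod block_len
     \<and> \<delta> mod block_len < copy_count (block \<delta>) + nbhd_count (block \<delta>)"

text \<open>For endpoints (x, s, y) and (x', not s, y') this is y_True - y_False mod n, so it does not
  depend on which endpoint comes first.\<close>

definition offset :: "bool \<Rightarrow> int \<Rightarrow> int \<Rightarrow> nat" where
  "offset s y y' = nat ((if s then y - y' else y' - y) mod int n)"

definition verts :: "('a \<times> bool \<times> int) set" where "verts = V \<times> UNIV \<times> {0..<int n}"

fun adj :: "'a \<times> bool \<times> int \<Rightarrow> 'a \<times> bool \<times> int \<Rightarrow> bool" where
  "adj (x, s, y) (x', s', y') \<longleftrightarrow> (x, s, y) \<in> verts \<and> (x', s', y') \<in> verts \<and>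
     (s = s' \<and> y = y' \<and> {x, x'} \<in> E \<or>
      s \<noteq> s' \<and> (copy_diff (offset s y y') \<and> x' = x \<or> nbhd_diff (offset s y y') \<and> x' \<in> nbhd x))"

fun colour :: "'a \<times> bool \<times> int \<Rightarrow> 'a \<times> bool \<times> int \<Rightarrow> nat" where
  "colour (x, s, y) (x', s', y') = (if s = s' then c {x, x'} else q + block (offset s y y'))"

definition ext_deg :: "nat \<Rightarrow> nat" where
  "ext_deg j = (if j \<le> q then a j else nbhd_card * (W + m) + (j - q))"

lemma verts_iff [simp]: "(x, s, y) \<in> verts \<longleftrightarrow> x \<in> V \<and> 0 \<le> y \<and> y < int n"
  unfolding verts_def by auto

lemma finite_V: "finite V"
  using F_simple unfolding simple_graph_def by blast

lemma block_len_pos: "0 < block_len"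
  unfolding block_len_def using m_pos by simp

lemma n_pos: "0 < n"
  unfolding n_def using m_pos block_len_pos by simp

lemma offset_lt: "offset s y y' < n"
  unfolding offset_def using n_pos by (simp add: nat_less_iff)

lemma offset_swap: "s \<noteq> s' \<Longrightarrow> offset s' y' y = offset s y y'"
  unfolding offset_def by (cases s) auto

lemma bij_offset: "bij_betw (offset s y) {0..<int n} {..<n}"
proof (rule bij_betw_byWitness[where f' = "\<lambda>\<delta>. (if s then y - int \<delta> else y + int \<delta>) mod int n"])
  show "\<forall>y'\<in>{0..<int n}. (if s then y - int (offset s y y') else y + int (offset s y y')) mod int n = y'"
    unfolding offset_def using n_pos by (cases s) (auto simp: mod_simps)
  show "\<forall>\<delta>\<in>{..<n}. offset s y ((if s then y - int \<delta> else y + int \<delta>) mod int n) = \<delta>"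
    unfolding offset_def by (cases s) (auto simp: mod_simps)
  show "offset s y ` {0..<int n} \<subseteq> {..<n}"
    using offset_lt by blast
  show "(\<lambda>\<delta>. (if s then y - int \<delta> else y + int \<delta>) mod int n) ` {..<n} \<subseteq> {0..<int n}"
    using n_pos by auto
qed

sublocale G: relation_graph verts adj colour
proof
  show "finite verts"
    unfolding verts_def using finite_V by simp
  fix u w :: "'a \<times> bool \<times> int"
  obtain x s y x' s' y' where uw: "u = (x, s, y)" "w = (x', s', y')"
    by (cases u, cases w) auto
  show "adj u w \<Longrightarrow> u \<in> verts \<and> w \<in> verts"
    unfolding uw by simp
  show "adj u w \<Longrightarrow> adj w u"
    unfolding uw using offset_swap[of s s' y' y] closed_nbhd_sym[of x' E x]
    by (cases "s = s'") (auto simp: insert_commute)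
  show "\<not> adj u u"
    unfolding uw using simple_graph_edge_neq[OF F_simple, of x x] by auto
  show "colour u w = colour w u"
    unfolding uw using offset_swap[of s s' y' y] by (auto simp: insert_commute)
qed

lemma block_range: "\<delta> < n \<Longrightarrow> block \<delta> \<in> {1..m}"
proof -
  assume "\<delta> < n"
  then have "\<delta> div block_len < m"
    unfolding n_def by (simp add: less_mult_imp_div_less)
  then show ?thesis
    unfolding block_def by simp
qed

lemma not_copy_and_nbhd_diff: "\<not> (copy_diff \<delta> \<and> nbhd_diff \<delta>)"
  unfolding copy_diff_def nbhd_diff_def by simp

lemma copy_nbhd_count_le: "i \<le> m \<Longrightarrow> copy_count i + nbhd_count i \<le> block_len"
proof -
  assume "i \<le> m"
  then have "m * Suc nbhd_card = i * Suc nbhd_card + (m - i) * Suc nbhd_card"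
    by (metis add_mult_distrib le_add_diff_inverse)
  moreover have "m - i \<le> (m - i) * Suc nbhd_card"
    by simp
  ultimately show ?thesis
    unfolding copy_count_def nbhd_count_def block_len_def using \<open>i \<le> m\<close> by linarith
qed

lemma card_diffs_in_block:
  assumes "i \<in> {1..m}" "hi \<le> block_len"
  shows "card {\<delta>. \<delta> < n \<and> block \<delta> = i \<and> lo \<le> \<delta> mod block_len \<and> \<delta> mod block_len < hi} = hi - lo"
proof -
  have "block \<delta> = i \<longleftrightarrow> \<delta> div block_len = i - 1" for \<delta>
    using assms(1) unfolding block_def by auto
  then show ?thesis
    unfolding n_def using card_block_interval[of "i - 1" m hi block_len lo] assms by auto
qed

lemma card_copy_diffs:
  assumes "i \<in> {1..m}"
  shows "card {\<delta>. copy_diff \<delta> \<and> block \<delta> = i} = copy_count i"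
proof -
  have "{\<delta>. copy_diff \<delta> \<and> block \<delta> = i}
      = {\<delta>. \<delta> < n \<and> block \<delta> = i \<and> 0 \<le> \<delta> mod block_len \<and> \<delta> mod block_len < copy_count i}"
    unfolding copy_diff_def by auto
  then show ?thesis
    using card_diffs_in_block[OF assms, of "copy_count i" 0] copy_nbhd_count_le[of i] assms by simp
qed

lemma card_nbhd_diffs:
  assumes "i \<in> {1..m}"
  shows "card {\<delta>. nbhd_diff \<delta> \<and> block \<delta> = i} = nbhd_count i"
proof -
  have "{\<delta>. nbhd_diff \<delta> \<and> block \<delta> = i} = {\<delta>. \<delta> < n \<and> block \<delta> = i
      \<and> copy_count i \<le> \<delta> mod block_len \<and> \<delta> mod block_len < copy_count i + nbhd_count i}"
    unfolding nbhd_diff_def by auto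
  then show ?thesis
    using card_diffs_in_block[OF assms, of "copy_count i + nbhd_count i" "copy_count i"]
      copy_nbhd_count_le[of i] assms by simp
qed

lemma card_nbhd_diffs_ge: "m * W \<le> card {\<delta>. nbhd_diff \<delta>}"
proof -
  have "card {\<delta>. nbhd_diff \<delta>} = (\<Sum>i=1..m. card {\<delta> \<in> {\<delta>. nbhd_diff \<delta>}. block \<delta> = i})"
  proof (rule card_eq_sum_colour_classes)
    show "finite {\<delta>. nbhd_diff \<delta>}"
      by (rule finite_subset[of _ "{..<n}"]) (auto simp: nbhd_diff_def)
    show "\<forall>\<delta>\<in>{\<delta>. nbhd_diff \<delta>}. block \<delta> \<in> {1..m}"
      using block_range by (simp add: nbhd_diff_def)
  qed
  also have "\<dots> = (\<Sum>i=1..m. nbhd_count i)"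
    using card_nbhd_diffs by (intro sum.cong) auto
  also have "\<dots> \<ge> (\<Sum>i=1..m. W)"
    unfolding nbhd_count_def by (intro sum_mono) auto
  finally show ?thesis
    by simp
qed

lemma card_nbhd: "x \<in> V \<Longrightarrow> card (nbhd x) = nbhd_card"
  unfolding nbhd_card_def using card_closed_nbhd[OF F_simple] F_degree by simp

lemma card_nbhd_edges: "x \<in> V \<Longrightarrow> card {e \<in> E. e \<subseteq> nbhd x} = nbhd_edges"
proof -
  assume x: "x \<in> V"
  have "card {e \<in> E. e \<subseteq> nbhd x} = (\<Sum>j=1..q. card {e \<in> {e \<in> E. e \<subseteq> nbhd x}. c e = j})"
    using simple_graph_finite_edges[OF F_simple] F_colour_range by (intro card_eq_sum_colour_classes) auto
  also have "\<dots> = (\<Sum>j=1..q. e_col E c j x)"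
    unfolding e_col_def by (intro sum.cong) auto
  also have "\<dots> = nbhd_edges"
    unfolding nbhd_edges_def using e_col_F[OF x] by simp
  finally show ?thesis .
qed

lemma card_nbhd_pairs:
  assumes "x \<in> V"
  shows "card {(x1, x2). x1 \<in> nbhd x \<and> x2 \<in> nbhd x \<and> x2 \<in> nbhd x1} = nbhd_card + 2 * nbhd_edges"
proof -
  have "{(x1, x2). x1 \<in> nbhd x \<and> x2 \<in> nbhd x \<and> x2 \<in> nbhd x1}
      = {(x1, x2). x1 \<in> nbhd x \<and> x2 \<in> nbhd x \<and> (x1 = x2 \<or> {x1, x2} \<in> E)}"
    by (auto simp: closed_nbhd_iff insert_commute)
  then show ?thesis
    using card_reflexive_adjacent_pairs[OF F_simple finite_closed_nbhd[OF F_simple assms]]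
      card_nbhd[OF assms] card_nbhd_edges[OF assms] by simp
qed

lemma G_nbhd_iff:
  assumes "(x, s, y) \<in> verts"
  shows "(x', s', y') \<in> closed_nbhd G.edges (x, s, y) \<longleftrightarrow>
    s' = s \<and> y' = y \<and> x' \<in> nbhd x \<or>
    s' \<noteq> s \<and> 0 \<le> y' \<and> y' < int n \<and>
      (copy_diff (offset s y y') \<and> x' = x \<or> nbhd_diff (offset s y y') \<and> x' \<in> nbhd x)"
  using assms simple_graph_edge_vertices[OF F_simple, of x x']
  by (auto simp: G.closed_nbhd_eq closed_nbhd_iff insert_commute)

lemma card_diff_pairs:
  assumes "i \<in> {1..m}" "finite Z1" "finite Z2"
  shows "card {(z, \<delta>). \<delta> \<in> {..<n} \<and> block \<delta> = i \<and> (copy_diff \<delta> \<and> z \<in> Z1 \<or> nbhd_diff \<delta> \<and> z \<in> Z2)}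
    = card Z1 * copy_count i + card Z2 * nbhd_count i"
proof -
  let ?C = "{\<delta>. copy_diff \<delta> \<and> block \<delta> = i}" and ?N = "{\<delta>. nbhd_diff \<delta> \<and> block \<delta> = i}"
  have "{(z, \<delta>). \<delta> \<in> {..<n} \<and> block \<delta> = i \<and> (copy_diff \<delta> \<and> z \<in> Z1 \<or> nbhd_diff \<delta> \<and> z \<in> Z2)}
      = Z1 \<times> ?C \<union> Z2 \<times> ?N"
    by (auto simp: copy_diff_def nbhd_diff_def)
  moreover have "Z1 \<times> ?C \<inter> Z2 \<times> ?N = {}"
    using not_copy_and_nbhd_diff by blast
  moreover have "finite ?C" "finite ?N"
    by (auto intro: finite_subset[of _ "{..<n}"] simp: copy_diff_def nbhd_diff_def)
  ultimately show ?thesis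
    using assms card_copy_diffs card_nbhd_diffs by (simp add: card_Un_disjoint card_cartesian_product)
qed

lemma colour_le_q_iff:
  "adj (x, s, y) (x', s', y') \<Longrightarrow> colour (x, s, y) (x', s', y') \<le> q \<longleftrightarrow> s' = s"
  using F_colour_range[of "{x, x'}"] by (cases "s' = s") (auto simp: block_def)

lemma deg_col_low:
  assumes v: "(x, s, y) \<in> verts" and j: "j \<in> {1..q}"
  shows "deg_col G.edges G.colouring j (x, s, y) = a j"
proof -
  have "{u. adj (x, s, y) u \<and> colour (x, s, y) u = j}
      = (\<lambda>x'. (x', s, y)) ` {x'. {x', x} \<in> E \<and> c {x', x} = j}"
  proof (intro equalityI subsetI)
    fix u assume u: "u \<in> {u. adj (x, s, y) u \<and> colour (x, s, y) u = j}"
    obtain x' s' y' where u_eq: "u = (x', s', y')"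
      by (cases u) auto
    with u j have "s' = s"
      using colour_le_q_iff[of x s y x' s' y'] by auto
    with u u_eq show "u \<in> (\<lambda>x'. (x', s, y)) ` {x'. {x', x} \<in> E \<and> c {x', x} = j}"
      by (auto simp: insert_commute)
  next
    fix u assume "u \<in> (\<lambda>x'. (x', s, y)) ` {x'. {x', x} \<in> E \<and> c {x', x} = j}"
    then show "u \<in> {u. adj (x, s, y) u \<and> colour (x, s, y) u = j}"
      using v simple_graph_edge_vertices[OF F_simple] by (auto simp: insert_commute)
  qed
  then have "deg_col G.edges G.colouring j (x, s, y) = card {x'. {x', x} \<in> E \<and> c {x', x} = j}"
    unfolding G.deg_col_eq by (simp add: card_image inj_on_def)
  also have "\<dots> = a j"
    using card_incident_edges[OF F_simple, of x "\<lambda>e. c e = j"] F_deg_col v j by (simp add: deg_col_def)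
  finally show ?thesis .
qed

lemma deg_col_high:
  assumes v: "(x, s, y) \<in> verts" and i: "i \<in> {1..m}"
  shows "deg_col G.edges G.colouring (q + i) (x, s, y) = copy_count i + nbhd_card * nbhd_count i"
proof -
  define \<Phi> where "\<Phi> x' \<delta> \<longleftrightarrow> block \<delta> = i \<and> (copy_diff \<delta> \<and> x' \<in> {x} \<or> nbhd_diff \<delta> \<and> x' \<in> nbhd x)"
    for x' \<delta>
  have "{u. adj (x, s, y) u \<and> colour (x, s, y) u = q + i}
      = (\<lambda>(x', y'). (x', \<not> s, y')) ` {(x', y'). y' \<in> {0..<int n} \<and> \<Phi> x' (offset s y y')}"
  proof (intro equalityI subsetI)
    fix u assume u: "u \<in> {u. adj (x, s, y) u \<and> colour (x, s, y) u = q + i}"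
    obtain x' s' y' where u_eq: "u = (x', s', y')"
      by (cases u) auto
    with u i have "s' = (\<not> s)"
      using colour_le_q_iff[of x s y x' s' y'] by auto
    with u u_eq show "u \<in> (\<lambda>(x', y'). (x', \<not> s, y')) ` {(x', y'). y' \<in> {0..<int n} \<and> \<Phi> x' (offset s y y')}"
      unfolding \<Phi>_def by (auto simp: image_iff)
  next
    fix u assume "u \<in> (\<lambda>(x', y'). (x', \<not> s, y')) ` {(x', y'). y' \<in> {0..<int n} \<and> \<Phi> x' (offset s y y')}"
    then show "u \<in> {u. adj (x, s, y) u \<and> colour (x, s, y) u = q + i}"
      using v closed_nbhd_subset[OF F_simple, of x] unfolding \<Phi>_def by auto
  qed
  then have "deg_col G.edges G.colouring (q + i) (x, s, y)
      = card {(x', y'). y' \<in> {0..<int n} \<and> \<Phi> x' (offset s y y')}"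
    unfolding G.deg_col_eq by (simp add: card_image inj_on_def)
  also have "\<dots> = card {(x', \<delta>). \<delta> \<in> {..<n} \<and> \<Phi> x' \<delta>}"
    by (rule card_reindex_snd[OF bij_offset])
  also have "\<dots> = copy_count i + nbhd_card * nbhd_count i"
    unfolding \<Phi>_def
    using card_diff_pairs[OF i, of "{x}" "nbhd x"] finite_closed_nbhd[OF F_simple, of x] card_nbhd[of x] v
    by simp
  finally show ?thesis .
qed

lemma e_col_low:
  assumes v: "(x, s, y) \<in> verts" and j: "j \<in> {1..q}"
  shows "e_col G.edges G.colouring j (x, s, y) = D j * Suc (card {\<delta>. nbhd_diff \<delta>})"
proof -
  let ?N = "closed_nbhd G.edges (x, s, y)"
  define PF where "PF = {(x1, x2). x1 \<in> nbhd x \<and> x2 \<in> nbhd x \<and> {x1, x2} \<in> E \<and> c {x1, x2} = j}"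
  define layers where
    "layers = insert (s, y) ((\<lambda>y'. (\<not> s, y')) ` {y' \<in> {0..<int n}. nbhd_diff (offset s y y')})"
  define lift :: "('a \<times> 'a) \<times> bool \<times> int \<Rightarrow> ('a \<times> bool \<times> int) \<times> ('a \<times> bool \<times> int)"
    where "lift = (\<lambda>((x1, x2), s', y'). ((x1, s', y'), (x2, s', y')))"
  have "{(u, w). u \<in> ?N \<and> w \<in> ?N \<and> adj u w \<and> colour u w = j} = lift ` (PF \<times> layers)"
  proof (intro equalityI subsetI)
    fix z assume z: "z \<in> {(u, w). u \<in> ?N \<and> w \<in> ?N \<and> adj u w \<and> colour u w = j}"
    obtain x1 s1 y1 x2 s2 y2 where z_eq: "z = ((x1, s1, y1), (x2, s2, y2))"
      by (cases z) auto
    with z j have "s2 = s1"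
      using colour_le_q_iff[of x1 s1 y1 x2 s2 y2] by auto
    with z z_eq have edge: "y2 = y1" "{x1, x2} \<in> E" "c {x1, x2} = j"
      by auto
    then have "x1 \<noteq> x2"
      using simple_graph_edge_neq[OF F_simple] by blast
    with z z_eq \<open>s2 = s1\<close> edge have "(x1, x2) \<in> PF" "(s1, y1) \<in> layers"
      unfolding PF_def layers_def using G_nbhd_iff[OF v] not_copy_and_nbhd_diff by auto
    then show "z \<in> lift ` (PF \<times> layers)"
      unfolding z_eq \<open>s2 = s1\<close> edge(1) lift_def by force
  next
    fix z assume "z \<in> lift ` (PF \<times> layers)"
    then obtain x1 x2 s' y' where z_eq: "z = ((x1, s', y'), (x2, s', y'))" and
      "(x1, x2) \<in> PF" "(s', y') \<in> layers"
      unfolding lift_def by auto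
    then show "z \<in> {(u, w). u \<in> ?N \<and> w \<in> ?N \<and> adj u w \<and> colour u w = j}"
      unfolding PF_def layers_def using v G_nbhd_iff[OF v] closed_nbhd_subset[OF F_simple, of x] by auto
  qed
  moreover have "inj_on lift (PF \<times> layers)"
    unfolding lift_def by (rule inj_onI) auto
  moreover have "card PF = 2 * D j"
    unfolding PF_def using card_adjacent_pairs[OF F_simple, of "nbhd x" "\<lambda>e. c e = j"] e_col_F[of x j] v j
    by (simp add: e_col_def)
  moreover have "card layers = Suc (card {\<delta>. nbhd_diff \<delta>})"
  proof -
    let ?Y = "{y' \<in> {0..<int n}. nbhd_diff (offset s y y')}"
    have "card ?Y = card {\<delta> \<in> {..<n}. nbhd_diff \<delta>}"
      by (rule card_reindex[OF bij_offset])
    also have "{\<delta> \<in> {..<n}. nbhd_diff \<delta>} = {\<delta>. nbhd_diff \<delta>}"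
      by (auto simp: nbhd_diff_def)
    finally have "card ((\<lambda>y'. (\<not> s, y')) ` ?Y) = card {\<delta>. nbhd_diff \<delta>}"
      by (simp add: card_image inj_on_def)
    moreover have "finite ?Y"
      by (rule finite_subset[of _ "{0..<int n}"]) auto
    ultimately show ?thesis
      unfolding layers_def by (subst card_insert_disjoint) auto
  qed
  ultimately have "2 * e_col G.edges G.colouring j (x, s, y) = 2 * D j * Suc (card {\<delta>. nbhd_diff \<delta>})"
    unfolding G.e_col_eq by (simp add: card_image card_cartesian_product)
  then show ?thesis
    by simp
qed

lemma e_col_high:
  assumes v: "(x, s, y) \<in> verts" and i: "i \<in> {1..m}"
  shows "e_col G.edges G.colouring (q + i) (x, s, y)
    = copy_count i + (nbhd_card + 2 * nbhd_edges) * nbhd_count i"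
proof -
  let ?N = "closed_nbhd G.edges (x, s, y)"
  let ?Y = "{(u, w). u \<in> ?N \<and> w \<in> ?N \<and> adj u w \<and> colour u w = q + i}"
  define PP where "PP = {(x1, x2). x1 \<in> nbhd x \<and> x2 \<in> nbhd x \<and> x2 \<in> nbhd x1}"
  define \<Psi> where "\<Psi> z \<delta> \<longleftrightarrow> block \<delta> = i \<and> (copy_diff \<delta> \<and> z \<in> {(x, x)} \<or> nbhd_diff \<delta> \<and> z \<in> PP)"
    for z \<delta>
  define lift :: "('a \<times> 'a) \<times> int \<Rightarrow> ('a \<times> bool \<times> int) \<times> ('a \<times> bool \<times> int)"
    where "lift = (\<lambda>((x1, x2), y'). ((x1, s, y), (x2, \<not> s, y')))"
  have sides: "fst (snd u) = s \<longleftrightarrow> fst (snd w) \<noteq> s" if "(u, w) \<in> ?Y" for u w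
  proof -
    obtain x1 s1 y1 x2 s2 y2 where "u = (x1, s1, y1)" "w = (x2, s2, y2)"
      by (cases u, cases w) auto
    with that i show ?thesis
      using colour_le_q_iff[of x1 s1 y1 x2 s2 y2] by auto
  qed
  have "card ?Y = 2 * card {z \<in> ?Y. fst (snd (fst z)) = s}"
  proof (rule card_swap_closed_pairs)
    show "finite ?Y"
      by (rule finite_subset[of _ "verts \<times> verts"]) (use G.adj_in_V G.finite_V in auto)
    show "(w, u) \<in> ?Y" if "(u, w) \<in> ?Y" for u w
      using that G.adj_sym G.colour_sym by auto
  qed (use sides in simp)
  moreover have "{z \<in> ?Y. fst (snd (fst z)) = s} = lift ` {(z, y'). y' \<in> {0..<int n} \<and> \<Psi> z (offset s y y')}"
  proof (intro equalityI subsetI)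
    fix z assume z: "z \<in> {z \<in> ?Y. fst (snd (fst z)) = s}"
    obtain x1 s1 y1 x2 s2 y2 where z_eq: "z = ((x1, s1, y1), (x2, s2, y2))"
      by (cases z) auto
    with z have "s1 = s" "s2 = (\<not> s)"
      using sides[of "(x1, s1, y1)" "(x2, s2, y2)"] by auto
    with z z_eq have "y1 = y" "x1 \<in> nbhd x" "0 \<le> y2" "y2 < int n" "\<Psi> (x1, x2) (offset s y y2)"
      unfolding \<Psi>_def PP_def using G_nbhd_iff[OF v] not_copy_and_nbhd_diff by auto
    then show "z \<in> lift ` {(z, y'). y' \<in> {0..<int n} \<and> \<Psi> z (offset s y y')}"
      unfolding z_eq \<open>s1 = s\<close> \<open>s2 = (\<not> s)\<close> lift_def by force
  next
    fix z assume "z \<in> lift ` {(z, y'). y' \<in> {0..<int n} \<and> \<Psi> z (offset s y y')}"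
    then obtain x1 x2 y' where z_eq: "z = ((x1, s, y), (x2, \<not> s, y'))"
      and "y' \<in> {0..<int n}" "\<Psi> (x1, x2) (offset s y y')"
      unfolding lift_def by auto
    then show "z \<in> {z \<in> ?Y. fst (snd (fst z)) = s}"
      unfolding \<Psi>_def PP_def using v G_nbhd_iff[OF v] closed_nbhd_subset[OF F_simple, of x] by auto
  qed
  moreover have "inj_on lift {(z, y'). y' \<in> {0..<int n} \<and> \<Psi> z (offset s y y')}"
    unfolding lift_def by (rule inj_onI) auto
  moreover have "card {(z, y'). y' \<in> {0..<int n} \<and> \<Psi> z (offset s y y')}
      = copy_count i + (nbhd_card + 2 * nbhd_edges) * nbhd_count i"
  proof -
    have "finite PP"
      unfolding PP_def
      by (rule finite_subset[of _ "nbhd x \<times> nbhd x"]) (use finite_closed_nbhd[OF F_simple] v in auto)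
    have "card {(z, y'). y' \<in> {0..<int n} \<and> \<Psi> z (offset s y y')}
        = card {(z, \<delta>). \<delta> \<in> {..<n} \<and> \<Psi> z \<delta>}"
      by (rule card_reindex_snd[OF bij_offset])
    with \<open>finite PP\<close> show ?thesis
      unfolding \<Psi>_def using card_diff_pairs[OF i, of "{(x, x)}" PP] card_nbhd_pairs[of x] v
      unfolding PP_def by simp
  qed
  ultimately have "2 * e_col G.edges G.colouring (q + i) (x, s, y)
      = 2 * (copy_count i + (nbhd_card + 2 * nbhd_edges) * nbhd_count i)"
    unfolding G.e_col_eq by (simp add: card_image)
  then show ?thesis
    by simp
qed

lemma D_decreasing: "1 \<le> j \<Longrightarrow> j < q \<Longrightarrow> D (Suc j) < D j"
proof -
  assume j: "1 \<le> j" "j < q"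
  obtain x where "x \<in> V"
    using F_nonempty by blast
  then show ?thesis
    using F_e_col_decreasing[OF \<open>x \<in> V\<close> j] e_col_F[of x j] e_col_F[of x "Suc j"] j by simp
qed

lemma ext_deg_high: "i \<in> {1..m} \<Longrightarrow> copy_count i + nbhd_card * nbhd_count i = ext_deg (q + i)"
proof -
  assume i: "i \<in> {1..m}"
  then have "nbhd_card * (W + m) = nbhd_card * nbhd_count i + nbhd_card * i"
    unfolding nbhd_count_def by (simp add: add_mult_distrib2[symmetric])
  then show ?thesis
    unfolding copy_count_def ext_deg_def using i by simp
qed

lemma ext_deg_increasing: "1 \<le> i \<Longrightarrow> i < j \<Longrightarrow> j \<le> q + m \<Longrightarrow> ext_deg i < ext_deg j"
proof -
  assume ij: "1 \<le> i" "i < j" "j \<le> q + m"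
  consider "j \<le> q" | "i \<le> q" "q < j" | "q < i"
    using ij by linarith
  then show ?thesis
  proof cases
    case 1
    then show ?thesis
      unfolding ext_deg_def using F_deg_increasing[of i j] ij by simp
  next
    case 2
    have "a i < nbhd_card"
      unfolding nbhd_card_def using member_le_sum[of i "{1..q}" a] ij 2 by simp
    also have "\<dots> \<le> nbhd_card * (W + m)"
      using m_pos by simp
    finally show ?thesis
      unfolding ext_deg_def using 2 by simp
  next
    case 3
    then show ?thesis
      unfolding ext_deg_def using ij by simp
  qed
qed

lemma G_colour_range: "e \<in> G.edges \<Longrightarrow> G.colouring e \<in> {1..q + m}"
proof -
  assume "e \<in> G.edges"
  then obtain x s y x' s' y' where e: "e = {(x, s, y), (x', s', y')}" "adj (x, s, y) (x', s', y')"
    unfolding graph_edges_def by force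
  then have "G.colouring e = colour (x, s, y) (x', s', y')"
    using G.colour_doubleton by simp
  then show ?thesis
    using e(2) F_colour_range[of "{x, x'}"] block_range[OF offset_lt, of s y y'] by auto
qed

lemma G_deg_col: "v \<in> verts \<Longrightarrow> j \<in> {1..q + m} \<Longrightarrow> deg_col G.edges G.colouring j v = ext_deg j"
proof -
  assume v: "v \<in> verts" and j: "j \<in> {1..q + m}"
  obtain x s y where v_eq: "v = (x, s, y)"
    by (cases v) auto
  show ?thesis
  proof (cases "j \<le> q")
    case True
    then show ?thesis
      using deg_col_low v j unfolding v_eq ext_deg_def by simp
  next
    case False
    then have "j - q \<in> {1..m}" "j = q + (j - q)"
      using j by auto
    then show ?thesis
      using deg_col_high[of x s y "j - q"] ext_deg_high[of "j - q"] v unfolding v_eq by metis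
  qed
qed

lemma G_e_col_decreasing:
  assumes big: "nbhd_card + 2 * nbhd_edges < D q * m"
    and W_big: "Suc nbhd_card + (nbhd_card + 2 * nbhd_edges) * m < W"
    and v: "v \<in> verts" and j: "1 \<le> j" "j < q + m"
  shows "e_col G.edges G.colouring (Suc j) v < e_col G.edges G.colouring j v"
proof -
  obtain x s y where v_eq: "v = (x, s, y)"
    by (cases v) auto
  define P where "P = nbhd_card + 2 * nbhd_edges"
  define S where "S = Suc (card {\<delta>. nbhd_diff \<delta>})"
  consider "j < q" | "j = q" | "q < j"
    by linarith
  then show ?thesis
  proof cases
    case 1
    then have "D (Suc j) * S < D j * S"
      using D_decreasing[OF j(1) 1] unfolding S_def by (intro mult_strict_right_mono) simp_all
    then show ?thesis
      using e_col_low v 1 j unfolding v_eq S_def by simp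
  next
    case 2
    have "copy_count 1 + P * nbhd_count 1 \<le> Suc nbhd_card + P * m + P * W"
      unfolding copy_count_def nbhd_count_def by (simp add: algebra_simps)
    also have "\<dots> < (P + 1) * W"
      using W_big unfolding P_def by (simp add: algebra_simps)
    also have "\<dots> \<le> D q * m * W"
      using big unfolding P_def by (intro mult_right_mono) auto
    also have "\<dots> \<le> D q * card {\<delta>. nbhd_diff \<delta>}"
      using card_nbhd_diffs_ge by (simp add: mult.assoc)
    also have "\<dots> < D q * S"
      using big unfolding S_def by (cases "D q") auto
    finally show ?thesis
      using e_col_high[of x s y 1] e_col_low[of x s y q] v q_pos m_pos
      unfolding v_eq 2 P_def S_def by simp
  next
    case 3
    define i where "i = j - q"
    have i: "1 \<le> i" "i < m" "j = q + i"
      using 3 j unfolding i_def by auto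
    have "D q \<le> nbhd_edges"
      unfolding nbhd_edges_def using q_pos by (intro member_le_sum) auto
    with big have "Suc nbhd_card < P"
      unfolding P_def by (cases "D q") auto
    moreover have "nbhd_count i = Suc (nbhd_count (Suc i))" "copy_count (Suc i) = copy_count i + Suc nbhd_card"
      unfolding nbhd_count_def copy_count_def using i by auto
    ultimately have "copy_count (Suc i) + P * nbhd_count (Suc i) < copy_count i + P * nbhd_count i"
      by simp
    then show ?thesis
      using e_col_high[of x s y i] e_col_high[of x s y "Suc i"] v i unfolding v_eq P_def by simp
  qed
qed

lemma flip_graph_extension:
  assumes "nbhd_card + 2 * nbhd_edges < D q * m"
    and "Suc nbhd_card + (nbhd_card + 2 * nbhd_edges) * m < W"
  shows "flip_graph verts G.edges G.colouring (q + m) ext_deg"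
  unfolding flip_graph_def
proof (intro conjI ballI allI impI)
  show "simple_graph verts G.edges"
    by (rule G.simple_graph)
  obtain x where "x \<in> V"
    using F_nonempty by blast
  then have "(x, True, 0) \<in> verts"
    using n_pos by simp
  then show "verts \<noteq> {}"
    by blast
  show "0 < ext_deg j" if "j \<in> {1..q + m}" for j
    unfolding ext_deg_def using F_deg_pos that by auto
  show "ext_deg i < ext_deg j" if "1 \<le> i \<and> i < j \<and> j \<le> q + m" for i j
    using ext_deg_increasing that by blast
  show "G.colouring e \<in> {1..q + m}" if "e \<in> G.edges" for e
    using G_colour_range that .
  show "deg_col G.edges G.colouring j v = ext_deg j" if "v \<in> verts" "j \<in> {1..q + m}" for v j
    using G_deg_col that .
  show "card {e \<in> G.edges. v \<in> e} = (\<Sum>j=1..q + m. ext_deg j)" if "v \<in> verts" for v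
  proof -
    have "card {e \<in> G.edges. v \<in> e} = (\<Sum>j=1..q + m. card {e \<in> {e \<in> G.edges. v \<in> e}. G.colouring e = j})"
      using simple_graph_finite_edges[OF G.simple_graph] G_colour_range
      by (intro card_eq_sum_colour_classes) auto
    also have "\<dots> = (\<Sum>j=1..q + m. ext_deg j)"
      using G_deg_col[OF that] unfolding deg_col_def by (intro sum.cong) auto
    finally show ?thesis .
  qed
  show "e_col G.edges G.colouring (Suc j) v < e_col G.edges G.colouring j v"
    if "v \<in> verts" "1 \<le> j \<and> j < q + m" for v j
    using G_e_col_decreasing[OF assms that(1)] that(2) by simp
qed

lemma flip_extension_on_nat:
  assumes "nbhd_card + 2 * nbhd_edges < D q * m"
    and "Suc nbhd_card + (nbhd_card + 2 * nbhd_edges) * m < W"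
  shows "\<exists>(V' :: nat set) E' c' a'. (\<forall>j\<in>{1..q}. a' j = a j) \<and> W \<le> a' (q + m) \<and> flip_graph V' E' c' (q + m) a'"
proof -
  obtain V' :: "nat set" and E' c' where "flip_graph V' E' c' (q + m) ext_deg"
    using flip_graph_on_nat[OF flip_graph_extension[OF assms]] .
  moreover have "W \<le> ext_deg (q + m)"
    unfolding ext_deg_def nbhd_card_def using m_pos by simp
  moreover have "\<forall>j\<in>{1..q}. ext_deg j = a j"
    unfolding ext_deg_def by simp
  ultimately show ?thesis
    by blast
qed

end

section \<open>The numerical condition\<close>

lemma double_sum_le_of_bounded_decrements:
  fixes D :: "nat \<Rightarrow> nat" and \<xi> :: int
  assumes "\<And>j. 1 \<le> j \<Longrightarrow> j < q \<Longrightarrow> int (D j) - int (D (Suc j)) \<le> \<xi>"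
  shows "r \<le> q \<Longrightarrow> 2 * (\<Sum>j=1..r. int (D j)) \<le> 2 * int r * int (D r) + \<xi> * int r * (int r - 1)"
proof (induction r)
  case 0
  then show ?case by simp
next
  case (Suc r)
  show ?case
  proof (cases "r = 0")
    case True
    then show ?thesis by simp
  next
    case False
    then have "int (D r) \<le> int (D (Suc r)) + \<xi>"
      using assms[of r] Suc.prems by simp
    then have "2 * int r * int (D r) \<le> 2 * int r * (int (D (Suc r)) + \<xi>)"
      by (intro mult_left_mono) simp_all
    then show ?thesis
      using Suc by (simp add: algebra_simps)
  qed
qed

lemma flip_graph_sum_degrees_le:
  assumes flip: "flip_graph V E c q a" and e_col: "\<forall>v\<in>V. \<forall>j\<in>{1..q}. e_col E c j v = D j"
  shows "(\<Sum>j=1..q. a j) \<le> q * D q"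
proof -
  note F = flip_graphD[OF flip]
  obtain v where v: "v \<in> V"
    using F(2) by blast
  have "a j \<le> D q" if j: "j \<in> {1..q}" for j
  proof -
    have "a j \<le> a q"
      using F(4)[of j q] j by (cases "j = q") auto
    also have "\<dots> = deg_col E c q v"
      using F(7)[OF v, of q] j by simp
    also have "\<dots> \<le> e_col E c q v"
      by (rule deg_col_le_e_col[OF F(1)])
    also have "\<dots> = D q"
      using e_col v j by simp
    finally show ?thesis .
  qed
  then have "(\<Sum>j=1..q. a j) \<le> (\<Sum>j=1..q. D q)"
    by (intro sum_mono) simp
  then show ?thesis
    by simp
qed

lemma flip_extension_condition:
  fixes q k :: nat and D a :: "nat \<Rightarrow> nat"
  assumes "1 < q" "4 * q < k"
    and hyp: "int (D q) * (int k - 4 * int q) >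
           1 + Max {int (D j) - int (D (Suc j)) | j. 1 \<le> j \<and> j < q} * int q * (int q - 1)
             + 5 * int ((k - q) choose 2)"
    and "flip_graph V E c q a" "\<forall>v\<in>V. \<forall>j\<in>{1..q}. e_col E c j v = D j"
  shows "1 + (\<Sum>j=1..q. a j) + 2 * (\<Sum>j=1..q. D j) < D q * (k - q)"
proof -
  define \<xi> where "\<xi> = Max {int (D j) - int (D (Suc j)) | j. 1 \<le> j \<and> j < q}"
  have "finite {int (D j) - int (D (Suc j)) | j. 1 \<le> j \<and> j < q}"
    by (rule finite_subset[of _ "(\<lambda>j. int (D j) - int (D (Suc j))) ` {1..<q}"]) auto
  then have "int (D j) - int (D (Suc j)) \<le> \<xi>" if "1 \<le> j" "j < q" for j
    unfolding \<xi>_def using that by (intro Max_ge) auto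
  then have "2 * (\<Sum>j=1..q. int (D j)) \<le> 2 * int q * int (D q) + \<xi> * int q * (int q - 1)"
    using double_sum_le_of_bounded_decrements by blast
  moreover have "int (\<Sum>j=1..q. a j) \<le> int q * int (D q)"
    using flip_graph_sum_degrees_le[OF assms(4,5)] by (simp only: of_nat_le_iff flip: of_nat_mult)
  moreover have "int (D q) * (int k - 4 * int q) = int (D q) * int (k - q) - 3 * (int q * int (D q))"
    using assms(2) by (simp add: algebra_simps of_nat_diff)
  ultimately have "int (1 + (\<Sum>j=1..q. a j) + 2 * (\<Sum>j=1..q. D j)) < int (D q * (k - q))"
    using hyp unfolding \<xi>_def by (simp add: of_nat_sum)
  then show ?thesis
    by (simp only: of_nat_less_iff)
qed

theorem lemma4p4:
  fixes q k :: nat and D a :: "nat \<Rightarrow> nat"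
    and V :: "'a set" and E :: "'a set set" and c :: "'a set \<Rightarrow> nat"
  assumes "1 < q" and "4 * q < k"
    and "int (D q) * (int k - 4 * int q) >
           1 + Max {int (D j) - int (D (Suc j)) | j. 1 \<le> j \<and> j < q} * int q * (int q - 1)
             + 5 * int ((k - q) choose 2)"
    and "flip_graph V E c q a"
    and "\<forall>v\<in>V. \<forall>j\<in>{1..q}. e_col E c j v = D j"
  shows "\<forall>N::nat. \<exists>(V' :: nat set) E' c' a'.
           (\<forall>j\<in>{1..q}. a' j = a j) \<and> a' k > N \<and> flip_graph V' E' c' k a'"
proof
  fix N :: nat
  define m where "m = k - q"
  define P where "P = Suc (\<Sum>j=1..q. a j) + 2 * (\<Sum>j=1..q. D j)"
  define W where "W = Suc (Suc (Suc (\<Sum>j=1..q. a j)) + P * m + N)"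
  interpret flip_extension V E c q a D m W
    using assms(1,2,4,5) unfolding m_def by unfold_locales auto
  have "nbhd_card + 2 * nbhd_edges < D q * m"
    using flip_extension_condition[OF assms] unfolding nbhd_card_def nbhd_edges_def m_def by simp
  moreover have "Suc nbhd_card + (nbhd_card + 2 * nbhd_edges) * m < W"
    unfolding W_def P_def nbhd_card_def nbhd_edges_def by simp
  ultimately obtain V' :: "nat set" and E' c' a'
    where "\<forall>j\<in>{1..q}. a' j = a j" "W \<le> a' (q + m)" "flip_graph V' E' c' (q + m) a'"
    using flip_extension_on_nat by blast
  moreover have "q + m = k" "N < W"
    unfolding m_def W_def using assms(2) by simp_all
  ultimately show "\<exists>(V' :: nat set) E' c' a'. (\<forall>j\<in>{1..q}. a' j = a j) \<and> a' k > N \<and> flip_graph V' E' c' k a'"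
    by (metis order.strict_trans2)
qed

end
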